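(* Let $n\ge 0$. For a noncrossing linked partition $\pi$ of $[n+1]$, define a lattice path $\phi(\pi)$ starting at $(0,0)$ with steps $N=(0,1)$, $E=(1,0)$, $D=(1,1)$ as follows. For $i=0,1,\dots,n-1$ in turn (the path being on the vertical line $x=i$): Step 1: if $i+1$ is the minimum of a block $B$ of $\pi$ with $|B|=k$, perform $k-1$ $N$-steps (otherwise perform none); Step 2: perform one $D$-step if $i+2$ is a singly covered minimal element of $\pi$, and one $E$-step otherwise. Then $\phi(\pi)$ is a Schröder path of length $n$, and $\phi$ is a bijection from the set of noncrossing linked partitions of $[n+1]$ to the set of Schröder paths of length $n$.
   Context: Two finite sets of integers $E,F$ are nearly disjoint if for every $i\in E\cap F$ either ($i=\min(E)$, $|E|>1$, $i\ne\min(F)$) or ($i=\min(F)$, $|F|>1$, $i\ne\min(E)$). A linked partition of $[n]$ is a set of nonempty subsets (blocks) of $[n]$ with union $[n]$, any two distinct blocks nearly disjoint; it is noncrossing if there are no two distinct blocks $B,B'$ and $a,c\in B$, $b,d\in B'$ with $a<b<c<d$. In a linked partition each element lies in exactly one or exactly two blocks; it is called singly covered or doubly covered accordingly. An element $i$ is a minimal element of $\pi$ if it is the minimum of some block; it is a singly covered minimal element if in addition it is singly covered. A Schröder path of length $n$ is a lattice path from $(0,0)$ to $(n,n)$ with steps $(1,0)$, $(0,1)$, $(1,1)$ that never goes below the line $y=x$. *)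

theory Defs
  imports Main
begin

definition nearly_disjoint :: "nat set \<Rightarrow> nat set \<Rightarrow> bool" where
  "nearly_disjoint E F \<longleftrightarrow>
     (\<forall>i \<in> E \<inter> F.
        (i = Min E \<and> card E > 1 \<and> i \<noteq> Min F) \<or>
        (i = Min F \<and> card F > 1 \<and> i \<noteq> Min E))"

definition linked_partition :: "nat \<Rightarrow> nat set set \<Rightarrow> bool" where
  "linked_partition n \<pi> \<longleftrightarrow>
     (\<forall>B \<in> \<pi>. B \<noteq> {} \<and> B \<subseteq> {1..n}) \<and>
     \<Union>\<pi> = {1..n} \<and>
     (\<forall>B \<in> \<pi>. \<forall>B' \<in> \<pi>. B \<noteq> B' \<longrightarrow> nearly_disjoint B B')"

definition noncrossing :: "nat set set \<Rightarrow> bool" where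
  "noncrossing \<pi> \<longleftrightarrow>
     \<not> (\<exists>B \<in> \<pi>. \<exists>B' \<in> \<pi>. B \<noteq> B' \<and>
          (\<exists>a \<in> B. \<exists>c \<in> B. \<exists>b \<in> B'. \<exists>d \<in> B'. a < b \<and> b < c \<and> c < d))"

definition noncrossing_linked_partition :: "nat \<Rightarrow> nat set set \<Rightarrow> bool" where
  "noncrossing_linked_partition n \<pi> \<longleftrightarrow> linked_partition n \<pi> \<and> noncrossing \<pi>"

definition singly_covered :: "nat set set \<Rightarrow> nat \<Rightarrow> bool" where
  "singly_covered \<pi> i \<longleftrightarrow> card {B \<in> \<pi>. i \<in> B} = 1"

definition minimal_element :: "nat set set \<Rightarrow> nat \<Rightarrow> bool" where
  "minimal_element \<pi> i \<longleftrightarrow> (\<exists>B \<in> \<pi>. i = Min B)"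

definition singly_covered_minimal :: "nat set set \<Rightarrow> nat \<Rightarrow> bool" where
  "singly_covered_minimal \<pi> i \<longleftrightarrow> minimal_element \<pi> i \<and> singly_covered \<pi> i"

datatype step = N | E | D

fun dx :: "step \<Rightarrow> nat" where
  "dx N = 0" | "dx E = 1" | "dx D = 1"

fun dy :: "step \<Rightarrow> nat" where
  "dy N = 1" | "dy E = 0" | "dy D = 1"

definition xcoord :: "step list \<Rightarrow> nat" where
  "xcoord p = sum_list (map dx p)"

definition ycoord :: "step list \<Rightarrow> nat" where
  "ycoord p = sum_list (map dy p)"

definition schroeder_path :: "nat \<Rightarrow> step list \<Rightarrow> bool" where
  "schroeder_path n p \<longleftrightarrow>
     xcoord p = n \<and> ycoord p = n \<and>
     (\<forall>k \<le> length p. xcoord (take k p) \<le> ycoord (take k p))"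

definition phi_step1 :: "nat set set \<Rightarrow> nat \<Rightarrow> step list" where
  "phi_step1 \<pi> i =
     (if \<exists>B \<in> \<pi>. Min B = i + 1
      then replicate (card (THE B. B \<in> \<pi> \<and> Min B = i + 1) - 1) N
      else [])"

definition phi_step2 :: "nat set set \<Rightarrow> nat \<Rightarrow> step list" where
  "phi_step2 \<pi> i = (if singly_covered_minimal \<pi> (i + 2) then [D] else [E])"

definition phi :: "nat \<Rightarrow> nat set set \<Rightarrow> step list" where
  "phi n \<pi> = concat (map (\<lambda>i. phi_step1 \<pi> i @ phi_step2 \<pi> i) [0..<n])"

end

theory Submission
  imports Defs
begin

text \<open>
  Read \<open>phi n \<pi>\<close> column by column: column \<open>i\<close> has one \<open>N\<close>-step for every element of the
  block with minimum \<open>i + 1\<close> other than that minimum (its children), and ends with \<open>D\<close> or \<open>E\<close>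
  according to whether \<open>i + 2\<close> is a singly covered minimum. Every element that is not a
  singly covered minimum is the child of exactly one smaller element, so after \<open>k\<close> columns the
  path has height at least \<open>k\<close>, with equality after \<open>n\<close> columns: \<open>phi n \<pi>\<close> is a
  Schroeder path.

  Noncrossing forces the parent of \<open>x\<close> to be the largest \<open>a < x\<close> that still has a child
  \<open>\<ge> x\<close>. Hence the parents, and with them the partition, are recovered greedily from the child
  counts and the singly covered minima, i.e. from the path. Conversely, applied to any Schroeder
  path, the same greedy rule always finds a parent (staying above the diagonal is exactly the
  ballot condition needed for this) and produces a noncrossing linked partition that is mapped
  back to the path.
\<close>

section \<open>Lattice paths as sequences of columns\<close>

lemma xcoord_Nil [simp]: "xcoord [] = 0"
  and xcoord_Cons [simp]: "xcoord (s # p) = dx s + xcoord p"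
  and xcoord_append [simp]: "xcoord (p @ q) = xcoord p + xcoord q"
  by (simp_all add: xcoord_def)

lemma ycoord_Nil [simp]: "ycoord [] = 0"
  and ycoord_Cons [simp]: "ycoord (s # p) = dy s + ycoord p"
  and ycoord_append [simp]: "ycoord (p @ q) = ycoord p + ycoord q"
  by (simp_all add: ycoord_def)

lemma xcoord_replicate_N [simp]: "xcoord (replicate k N) = 0"
  and ycoord_replicate_N [simp]: "ycoord (replicate k N) = k"
  by (induction k) simp_all

definition column :: "nat \<Rightarrow> bool \<Rightarrow> step list" where
  "column h diag = replicate h N @ [if diag then D else E]"

definition columns :: "(nat \<Rightarrow> nat) \<Rightarrow> (nat \<Rightarrow> bool) \<Rightarrow> nat \<Rightarrow> step list" where
  "columns h d n = concat (map (\<lambda>i. column (h i) (d i)) [0..<n])"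

lemma columns_0 [simp]: "columns h d 0 = []"
  by (simp add: columns_def)

lemma columns_Suc: "columns h d (Suc n) = columns h d n @ column (h n) (d n)"
  by (simp add: columns_def)

lemma columns_Suc_shift:
  "columns h d (Suc n) = column (h 0) (d 0) @ columns (\<lambda>i. h (Suc i)) (\<lambda>i. d (Suc i)) n"
  by (simp add: columns_def upt_conv_Cons map_Suc_upt[symmetric] o_def del: upt_Suc)

lemma columns_cong:
  "(\<And>i. i < n \<Longrightarrow> h i = h' i \<and> d i = d' i) \<Longrightarrow> columns h d n = columns h' d' n"
  unfolding columns_def by (intro arg_cong[where f = concat] map_cong) auto

lemma xcoord_column [simp]: "xcoord (column h b) = 1"
  and ycoord_column [simp]: "ycoord (column h b) = h + (if b then 1 else 0)"
  by (simp_all add: column_def)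

lemma xcoord_columns [simp]: "xcoord (columns h d n) = n"
  by (induction n) (simp_all add: columns_Suc)

lemma ycoord_columns: "ycoord (columns h d n) = (\<Sum>i<n. h i) + card {i. i < n \<and> d i}"
proof (induction n)
  case (Suc n)
  have "{i. i < Suc n \<and> d i} = (if d n then insert n {i. i < n \<and> d i} else {i. i < n \<and> d i})"
    by (auto simp: less_Suc_eq)
  with Suc show ?case by (simp add: columns_Suc)
qed simp

lemma column_append_eq_iff:
  "column h b @ p = column h' b' @ p' \<longleftrightarrow> h = h' \<and> b = b' \<and> p = p'"
proof (induction h arbitrary: h')
  case 0 then show ?case by (cases h') (auto simp: column_def)
next
  case (Suc h) then show ?case by (cases h') (auto simp: column_def)
qed

lemma concat_map_column_eqD:
  assumes "concat (map (\<lambda>i. column (h i) (d i)) xs) = concat (map (\<lambda>i. column (h' i) (d' i)) xs)"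
    and "i \<in> set xs"
  shows "h i = h' i \<and> d i = d' i"
  using assms by (induction xs) (auto simp: column_append_eq_iff)

lemma columns_eqD: "columns h d n = columns h' d' n \<Longrightarrow> i < n \<Longrightarrow> h i = h' i \<and> d i = d' i"
  unfolding columns_def by (rule concat_map_column_eqD) auto

text \<open>The parameter \<open>t\<close> counts the \<open>N\<close>-steps of the current column read so far.\<close>

lemma replicate_N_append_eq_columns:
  assumes "p = [] \<or> last p \<noteq> N" and "p \<noteq> [] \<or> t = 0"
  shows "\<exists>h d. replicate t N @ p = columns h d (xcoord p)"
  using assms
proof (induction p arbitrary: t)
  case Nil then show ?case by simp
next
  case (Cons s p)
  show ?case
  proof (cases "s = N")
    case True
    with Cons.prems have "p \<noteq> []" and "last p \<noteq> N" by (auto split: if_splits)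
    with Cons.IH[of "Suc t"] True show ?thesis by (simp add: replicate_app_Cons_same)
  next
    case False
    with Cons.prems have "p = [] \<or> last p \<noteq> N" by (auto split: if_splits)
    with Cons.IH[of 0] obtain h d where p: "p = columns h d (xcoord p)" by auto
    have "replicate t N @ s # p = column t (s = D) @ p"
      using False by (cases s) (simp_all add: column_def)
    also have "\<dots> = columns (case_nat t h) (case_nat (s = D) d) (Suc (xcoord p))"
      by (subst p) (simp add: columns_Suc_shift)
    finally show ?thesis using False by (cases s) auto
  qed
qed

definition above_diagonal :: "step list \<Rightarrow> bool" where
  "above_diagonal p \<longleftrightarrow> (\<forall>k \<le> length p. xcoord (take k p) \<le> ycoord (take k p))"

lemma schroeder_path_iff:
  "schroeder_path n p \<longleftrightarrow> xcoord p = n \<and> ycoord p = n \<and> above_diagonal p"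
  by (simp add: schroeder_path_def above_diagonal_def)

lemma above_diagonal_append:
  "above_diagonal (p @ q) \<longleftrightarrow> above_diagonal p \<and>
     (\<forall>k \<le> length q. xcoord p + xcoord (take k q) \<le> ycoord p + ycoord (take k q))"
  unfolding above_diagonal_def
proof safe
  fix k assume "\<forall>k \<le> length (p @ q). xcoord (take k (p @ q)) \<le> ycoord (take k (p @ q))"
  then show "k \<le> length p \<Longrightarrow> xcoord (take k p) \<le> ycoord (take k p)"
    and "k \<le> length q \<Longrightarrow> xcoord p + xcoord (take k q) \<le> ycoord p + ycoord (take k q)"
    by (auto dest: spec[of _ k] spec[of _ "length p + k"])
next
  fix k
  assume "\<forall>k \<le> length p. xcoord (take k p) \<le> ycoord (take k p)"
    and "\<forall>k \<le> length q. xcoord p + xcoord (take k q) \<le> ycoord p + ycoord (take k q)"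
    and "k \<le> length (p @ q)"
  then show "xcoord (take k (p @ q)) \<le> ycoord (take k (p @ q))"
    by (cases "k \<le> length p") (auto dest: spec[of _ "k - length p"])
qed

lemma above_diagonal_append_column:
  "above_diagonal (p @ column h b) \<longleftrightarrow>
     above_diagonal p \<and> xcoord p < ycoord (p @ column h b)"
proof -
  let ?q = "column h b"
  have take_column: "take k ?q = replicate k N \<or> take k ?q = ?q" for k
    by (cases "k \<le> h") (auto simp: column_def take_append)
  have "(\<forall>k \<le> length ?q. xcoord p + xcoord (take k ?q) \<le> ycoord p + ycoord (take k ?q))
      \<longleftrightarrow> xcoord p \<le> ycoord p \<and> xcoord p < ycoord (p @ ?q)"
  proof
    assume "\<forall>k \<le> length ?q. xcoord p + xcoord (take k ?q) \<le> ycoord p + ycoord (take k ?q)"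
    from this[rule_format, of 0] this[rule_format, of "length ?q"]
    show "xcoord p \<le> ycoord p \<and> xcoord p < ycoord (p @ ?q)" by simp
  next
    assume below: "xcoord p \<le> ycoord p \<and> xcoord p < ycoord (p @ ?q)"
    show "\<forall>k \<le> length ?q. xcoord p + xcoord (take k ?q) \<le> ycoord p + ycoord (take k ?q)"
    proof (intro allI impI)
      fix k
      from take_column[of k] below
      show "xcoord p + xcoord (take k ?q) \<le> ycoord p + ycoord (take k ?q)"
        by (auto simp del: ycoord_column)
    qed
  qed
  moreover have "xcoord p \<le> ycoord p" if "above_diagonal p"
    using that by (auto simp: above_diagonal_def dest: spec[of _ "length p"])
  ultimately show ?thesis
    unfolding above_diagonal_append by blast
qed

lemma above_diagonal_columns:
  "above_diagonal (columns h d n) \<longleftrightarrow> (\<forall>k \<le> n. k \<le> ycoord (columns h d k))"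
proof (induction n)
  case 0 then show ?case by (simp add: above_diagonal_def)
next
  case (Suc n)
  then show ?case
    by (auto simp: columns_Suc above_diagonal_append_column le_Suc_eq simp del: ycoord_append)
qed

lemma schroeder_path_columns_iff:
  "schroeder_path n (columns h d n) \<longleftrightarrow>
     ycoord (columns h d n) = n \<and> (\<forall>k \<le> n. k \<le> ycoord (columns h d k))"
  by (auto simp: schroeder_path_iff above_diagonal_columns)

lemma schroeder_path_last_not_N:
  assumes "schroeder_path n p"
  shows "p = [] \<or> last p \<noteq> N"
proof (rule ccontr)
  assume "\<not> (p = [] \<or> last p \<noteq> N)"
  then have p: "p = butlast p @ [N]"
    by (metis append_butlast_last_id)
  then have "xcoord (butlast p) \<le> ycoord (butlast p)"
    using assms by (auto simp: schroeder_path_def butlast_conv_take dest: spec[of _ "length p - 1"])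
  moreover have "xcoord (butlast p) = n" "ycoord (butlast p) + 1 = n"
    using assms p[symmetric] xcoord_append[of "butlast p" "[N]"] ycoord_append[of "butlast p" "[N]"]
    by (simp_all add: schroeder_path_def)
  ultimately show False by simp
qed

lemma schroeder_path_obtain_columns:
  assumes "schroeder_path n p"
  obtains h d where "p = columns h d n"
  using replicate_N_append_eq_columns[of p 0] schroeder_path_last_not_N[OF assms] assms
  by (auto simp: schroeder_path_def)

section \<open>Children in a linked partition\<close>

definition children :: "nat set set \<Rightarrow> nat \<Rightarrow> nat set" where
  "children \<pi> a = {x. \<exists>B \<in> \<pi>. Min B = a \<and> x \<in> B \<and> x \<noteq> a}"

context
  fixes m :: nat and \<pi> :: "nat set set"
  assumes lp: "linked_partition m \<pi>"
begin

lemma block_bounded: "B \<in> \<pi> \<Longrightarrow> B \<noteq> {} \<and> B \<subseteq> {1..m}"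
  using lp by (auto simp: linked_partition_def)

lemma finite_block: "B \<in> \<pi> \<Longrightarrow> finite B"
  using block_bounded finite_subset by blast

lemma Min_block_in: "B \<in> \<pi> \<Longrightarrow> Min B \<in> B"
  using block_bounded finite_block by simp

lemma Min_block_le: "B \<in> \<pi> \<Longrightarrow> x \<in> B \<Longrightarrow> Min B \<le> x"
  using finite_block by simp

lemma common_element_of_blocks:
  "B \<in> \<pi> \<Longrightarrow> B' \<in> \<pi> \<Longrightarrow> B \<noteq> B' \<Longrightarrow> i \<in> B \<Longrightarrow> i \<in> B' \<Longrightarrow>
   (i = Min B \<and> card B > 1 \<and> i \<noteq> Min B') \<or> (i = Min B' \<and> card B' > 1 \<and> i \<noteq> Min B)"
  using lp unfolding linked_partition_def nearly_disjoint_def by blast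

lemma block_eq_if_Min_eq:
  assumes "B \<in> \<pi>" "B' \<in> \<pi>" "Min B = Min B'"
  shows "B = B'"
proof (rule ccontr)
  assume "B \<noteq> B'"
  moreover have "Min B \<in> B" "Min B \<in> B'"
    using Min_block_in[OF assms(1)] Min_block_in[OF assms(2)] assms(3) by auto
  ultimately show False
    using common_element_of_blocks[OF assms(1,2)] assms(3) by auto
qed

lemma children_Min_block: "B \<in> \<pi> \<Longrightarrow> children \<pi> (Min B) = B - {Min B}"
  unfolding children_def using block_eq_if_Min_eq by blast

lemma block_eq_insert_children: "B \<in> \<pi> \<Longrightarrow> B = insert (Min B) (children \<pi> (Min B))"
  using children_Min_block Min_block_in by auto

lemma children_bounds: "x \<in> children \<pi> a \<Longrightarrow> 1 \<le> a \<and> a < x \<and> x \<le> m"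
  unfolding children_def
  using block_bounded Min_block_in Min_block_le by (fastforce simp: le_neq_implies_less)

lemma finite_children: "finite (children \<pi> a)"
  by (rule finite_subset[of _ "{..m}"]) (auto dest: children_bounds)

lemma parent_unique:
  assumes "x \<in> children \<pi> a" "x \<in> children \<pi> b"
  shows "a = b"
proof (rule ccontr)
  assume "a \<noteq> b"
  obtain B B' where B: "B \<in> \<pi>" "Min B = a" "x \<in> B" "x \<noteq> a"
    and B': "B' \<in> \<pi>" "Min B' = b" "x \<in> B'" "x \<noteq> b"
    using assms by (auto simp: children_def)
  with \<open>a \<noteq> b\<close> have "B \<noteq> B'" by auto
  from common_element_of_blocks[OF B(1) B'(1) this B(3) B'(3)] B B' show False by simp
qed

lemma singly_covered_minimal_iff:
  "singly_covered_minimal \<pi> x \<longleftrightarrow> x \<in> {1..m} \<and> (\<forall>a. x \<notin> children \<pi> a)"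
proof
  assume "singly_covered_minimal \<pi> x"
  then obtain B where B: "B \<in> \<pi>" "x = Min B" and one: "card {B \<in> \<pi>. x \<in> B} = 1"
    by (auto simp: singly_covered_minimal_def minimal_element_def singly_covered_def)
  have "x \<in> B"
    using B Min_block_in by blast
  have "x \<notin> children \<pi> a" for a
  proof
    assume "x \<in> children \<pi> a"
    then obtain B' where B': "B' \<in> \<pi>" "x \<in> B'" "x \<noteq> Min B'"
      by (auto simp: children_def)
    obtain z where z: "{B \<in> \<pi>. x \<in> B} = {z}"
      using one card_1_singletonE by blast
    have "B \<in> {B \<in> \<pi>. x \<in> B}" "B' \<in> {B \<in> \<pi>. x \<in> B}"
      using B B' \<open>x \<in> B\<close> by simp_all
    then have "B = B'" unfolding z by simp
    with B B' show False by simp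
  qed
  moreover have "x \<in> {1..m}"
    using B(1) \<open>x \<in> B\<close> block_bounded by blast
  ultimately show "x \<in> {1..m} \<and> (\<forall>a. x \<notin> children \<pi> a)" by blast
next
  assume x: "x \<in> {1..m} \<and> (\<forall>a. x \<notin> children \<pi> a)"
  then have "x \<in> \<Union>\<pi>"
    using lp by (simp add: linked_partition_def)
  then obtain B where B: "B \<in> \<pi>" "x \<in> B" by blast
  have Min: "x = Min B'" if "B' \<in> \<pi>" "x \<in> B'" for B'
    using x that by (auto simp: children_def)
  then have "{B' \<in> \<pi>. x \<in> B'} = {B}"
    using B block_eq_if_Min_eq by auto
  with B Min show "singly_covered_minimal \<pi> x"
    by (auto simp: singly_covered_minimal_def minimal_element_def singly_covered_def)
qed

lemma block_Min_iff: "(\<exists>B \<in> \<pi>. Min B = a) \<longleftrightarrow> singly_covered_minimal \<pi> a \<or> children \<pi> a \<noteq> {}"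
proof
  assume "\<exists>B \<in> \<pi>. Min B = a"
  then obtain B where B: "B \<in> \<pi>" "Min B = a" by blast
  show "singly_covered_minimal \<pi> a \<or> children \<pi> a \<noteq> {}"
  proof (cases "children \<pi> a = {}")
    case True
    with B block_eq_insert_children have "B = {a}" by auto
    moreover have "a \<notin> children \<pi> b" for b
    proof
      assume "a \<in> children \<pi> b"
      then obtain B' where B': "B' \<in> \<pi>" "a \<in> B'" "a \<noteq> Min B'" by (auto simp: children_def)
      with B have "B \<noteq> B'" by auto
      from common_element_of_blocks[OF B(1) B'(1) this] B B' \<open>B = {a}\<close> show False by auto
    qed
    moreover have "a \<in> {1..m}"
      using block_bounded[OF B(1)] \<open>B = {a}\<close> by auto
    ultimately show ?thesis
      using singly_covered_minimal_iff by auto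
  qed simp
next
  assume "singly_covered_minimal \<pi> a \<or> children \<pi> a \<noteq> {}"
  then show "\<exists>B \<in> \<pi>. Min B = a"
    by (auto simp: singly_covered_minimal_def minimal_element_def children_def)
qed

lemma partition_eq_image_children:
  "\<pi> = (\<lambda>a. insert a (children \<pi> a)) ` {a. singly_covered_minimal \<pi> a \<or> children \<pi> a \<noteq> {}}"
    (is "_ = ?rhs")
proof
  show "\<pi> \<subseteq> ?rhs"
  proof
    fix B assume "B \<in> \<pi>"
    then have "Min B \<in> {a. singly_covered_minimal \<pi> a \<or> children \<pi> a \<noteq> {}}"
      using block_Min_iff by blast
    then show "B \<in> ?rhs"
      using block_eq_insert_children[OF \<open>B \<in> \<pi>\<close>] by (rule rev_image_eqI)
  qed
  show "?rhs \<subseteq> \<pi>"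
  proof
    fix B assume "B \<in> ?rhs"
    then obtain a where "singly_covered_minimal \<pi> a \<or> children \<pi> a \<noteq> {}"
      and B: "B = insert a (children \<pi> a)" by blast
    then obtain B' where "B' \<in> \<pi>" "Min B' = a"
      using block_Min_iff by blast
    with block_eq_insert_children B show "B \<in> \<pi>" by force
  qed
qed

lemma phi_step1_eq: "phi_step1 \<pi> i = replicate (card (children \<pi> (i + 1))) N"
proof (cases "\<exists>B \<in> \<pi>. Min B = i + 1")
  case True
  then obtain B where B: "B \<in> \<pi>" "Min B = i + 1" by blast
  have "(THE B. B \<in> \<pi> \<and> Min B = i + 1) = B"
  proof (rule the_equality)
    show "B \<in> \<pi> \<and> Min B = i + 1" using B by simp
    show "B' = B" if "B' \<in> \<pi> \<and> Min B' = i + 1" for B'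
      using that B block_eq_if_Min_eq[of B' B] by simp
  qed
  moreover have "children \<pi> (i + 1) = B - {i + 1}"
    using children_Min_block[OF B(1)] B(2) by simp
  moreover have "i + 1 \<in> B" "finite B"
    using Min_block_in[OF B(1)] finite_block[OF B(1)] B(2) by simp_all
  ultimately show ?thesis
    using True by (simp add: phi_step1_def)
next
  case False
  then show ?thesis by (auto simp: phi_step1_def children_def)
qed

lemma phi_eq_columns:
  "phi n \<pi> = columns (\<lambda>i. card (children \<pi> (i + 1))) (\<lambda>i. singly_covered_minimal \<pi> (i + 2)) n"
  unfolding phi_def columns_def column_def phi_step1_eq phi_step2_def
  by (intro arg_cong[where f = concat] map_cong) auto

lemma card_UN_children: "card (\<Union>a<k. children \<pi> a) = (\<Sum>a<k. card (children \<pi> a))"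
  by (rule card_UN_disjoint) (auto simp: finite_children dest: parent_unique)

lemma UN_children: "(\<Union>a. children \<pi> a) = {x \<in> {1..m}. \<not> singly_covered_minimal \<pi> x}"
  by (fastforce simp: singly_covered_minimal_iff dest: children_bounds)

lemma children_eq_empty: "a \<notin> {1..<m} \<Longrightarrow> children \<pi> a = {}"
  using children_bounds by fastforce

lemma singly_covered_minimal_bounds: "singly_covered_minimal \<pi> x \<Longrightarrow> x \<in> {1..m}"
  by (simp add: singly_covered_minimal_iff)

lemma singly_covered_minimal_1: "1 \<le> m \<Longrightarrow> singly_covered_minimal \<pi> 1"
  using children_bounds by (fastforce simp: singly_covered_minimal_iff)

lemma children_le_eq_image:
  assumes "k < m"
  shows "{x \<in> (\<Union>a. children \<pi> a). x \<le> k + 1} =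
    (\<lambda>i. i + 2) ` {i. i < k \<and> \<not> singly_covered_minimal \<pi> (i + 2)}"
proof (intro set_eqI iffI)
  fix x assume x: "x \<in> {x \<in> (\<Union>a. children \<pi> a). x \<le> k + 1}"
  then have "2 \<le> x"
    using children_bounds by fastforce
  then obtain i where "x = i + 2"
    by (metis le_add_diff_inverse2)
  with x show "x \<in> (\<lambda>i. i + 2) ` {i. i < k \<and> \<not> singly_covered_minimal \<pi> (i + 2)}"
    unfolding UN_children by auto
next
  fix x assume "x \<in> (\<lambda>i. i + 2) ` {i. i < k \<and> \<not> singly_covered_minimal \<pi> (i + 2)}"
  with assms show "x \<in> {x \<in> (\<Union>a. children \<pi> a). x \<le> k + 1}"
    unfolding UN_children by auto
qed

end

lemma card_lessThan_split: "card {i. i < k \<and> P i} + card {i. i < k \<and> \<not> P i} = k"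
proof -
  have "{i. i < k \<and> P i} \<union> {i. i < k \<and> \<not> P i} = {..<k}" by auto
  then show ?thesis by (subst card_Un_disjoint[symmetric]) auto
qed

lemma schroeder_path_phi:
  assumes lp: "linked_partition (n + 1) \<pi>"
  shows "schroeder_path n (phi n \<pi>)"
proof -
  let ?h = "\<lambda>i. card (children \<pi> (i + 1))" and ?d = "\<lambda>i. singly_covered_minimal \<pi> (i + 2)"
  define U where "U k = (\<Union>a<k + 1. children \<pi> a)" for k
  define C where "C k = {x \<in> (\<Union>a. children \<pi> a). x \<le> k + 1}" for k
  have "(\<Sum>a<Suc k. card (children \<pi> a)) = (\<Sum>i<k. ?h i)" for k
    unfolding sum.lessThan_Suc_shift using children_eq_empty[OF lp, of 0] by simp
  then have ycoord_eq: "ycoord (columns ?h ?d k) = card (U k) + card {i. i < k \<and> ?d i}" for k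
    by (simp add: ycoord_columns U_def card_UN_children[OF lp])
  have card_C: "card (C k) + card {i. i < k \<and> ?d i} = k" if "k \<le> n" for k
  proof -
    have "C k = (\<lambda>i. i + 2) ` {i. i < k \<and> \<not> ?d i}"
      unfolding C_def using that by (intro children_le_eq_image[OF lp]) simp
    then have "card (C k) = card {i. i < k \<and> \<not> ?d i}"
      by (simp add: card_image inj_on_def)
    then show ?thesis
      using card_lessThan_split[of k ?d] by simp
  qed
  have "C k \<subseteq> U k" for k
    using children_bounds[OF lp] by (fastforce simp: C_def U_def)
  then have C_le_U: "card (C k) \<le> card (U k)" for k
    by (rule card_mono[rotated]) (simp add: U_def finite_children[OF lp])
  have "U n \<subseteq> C n"
    using children_bounds[OF lp] by (fastforce simp: C_def U_def)
  then have U_le_C: "card (U n) \<le> card (C n)"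
    by (rule card_mono[rotated]) (simp add: C_def)
  have "k \<le> ycoord (columns ?h ?d k)" if "k \<le> n" for k
    using card_C[OF that] C_le_U[of k] ycoord_eq[of k] by linarith
  moreover have "ycoord (columns ?h ?d n) = n"
    using card_C[of n] C_le_U[of n] U_le_C ycoord_eq[of n] by linarith
  ultimately show ?thesis
    unfolding phi_eq_columns[OF lp] schroeder_path_columns_iff by blast
qed

section \<open>Greedy parents\<close>

text \<open>
  The parent of \<open>x\<close> is the largest \<open>a < x\<close> whose quota \<open>c a\<close> of children is not yet used up
  by the elements before \<open>x\<close>. The recursion is phrased with lists so that the function
  package sees the recursive calls on smaller arguments.
\<close>

function greedy_parent :: "(nat \<Rightarrow> nat) \<Rightarrow> (nat \<Rightarrow> bool) \<Rightarrow> nat \<Rightarrow> nat" where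
  "greedy_parent c q x =
     (if q x then Max (set (filter (\<lambda>a. length (filter (\<lambda>y. greedy_parent c q y = a) [1..<x]) < c a)
                                  [1..<x]))
      else 0)"
  by auto
termination by (relation "measure (\<lambda>(c, q, x). x)") auto

declare greedy_parent.simps [simp del]

definition available_parents :: "(nat \<Rightarrow> nat) \<Rightarrow> (nat \<Rightarrow> bool) \<Rightarrow> nat \<Rightarrow> nat set" where
  "available_parents c q x = {a \<in> {1..<x}. card {y \<in> {1..<x}. greedy_parent c q y = a} < c a}"

lemma greedy_parent_eq: "greedy_parent c q x = (if q x then Max (available_parents c q x) else 0)"
proof -
  have "length (filter (\<lambda>y. greedy_parent c q y = a) [1..<x]) = card {y \<in> {1..<x}. greedy_parent c q y = a}"
    for a by (subst distinct_length_filter) (auto intro: arg_cong[where f = card])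
  then show ?thesis
    by (subst greedy_parent.simps) (simp add: available_parents_def)
qed

lemma greedy_parent_pos_imp: "0 < greedy_parent c q y \<Longrightarrow> q y"
  by (metis greedy_parent_eq less_irrefl)

lemma finite_available_parents: "finite (available_parents c q x)"
  by (simp add: available_parents_def)

context
  fixes m :: nat and \<pi> :: "nat set set"
  assumes lp: "linked_partition m \<pi>" and nc: "noncrossing \<pi>"
begin

lemma children_noncrossing:
  assumes "x \<in> children \<pi> a" "d \<in> children \<pi> b" "a < b" "b < x" "x < d"
  shows False
proof -
  obtain B B' where B: "B \<in> \<pi>" "Min B = a" "x \<in> B" and B': "B' \<in> \<pi>" "Min B' = b" "d \<in> B'"
    using assms(1,2) by (auto simp: children_def)
  have "a \<in> B" "b \<in> B'"
    using Min_block_in[OF lp B(1)] Min_block_in[OF lp B'(1)] B(2) B'(2) by simp_all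
  with B(3) B'(3) assms(3-5) have crossing: "\<exists>a\<in>B. \<exists>c\<in>B. \<exists>b\<in>B'. \<exists>d\<in>B'. a < b \<and> b < c \<and> c < d"
    by blast
  have "B \<noteq> B'" using B(2) B'(2) \<open>a < b\<close> by auto
  with nc B(1) B'(1) crossing show False
    unfolding noncrossing_def by metis
qed

lemma children_eq_greedy_parent:
  "x \<in> children \<pi> a \<longleftrightarrow> (\<exists>b. x \<in> children \<pi> b) \<and>
     greedy_parent (\<lambda>a. card (children \<pi> a)) (\<lambda>y. \<exists>b. y \<in> children \<pi> b) x = a"
proof (induction x arbitrary: a rule: less_induct)
  case (less x)
  let ?c = "\<lambda>a. card (children \<pi> a)" and ?q = "\<lambda>y. \<exists>b. y \<in> children \<pi> b"
  let ?parent = "greedy_parent ?c ?q"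
  have earlier_children: "{y \<in> {1..<x}. ?parent y = a} = {y \<in> children \<pi> a. y < x}" if "1 \<le> a" for a
  proof -
    have "y \<in> children \<pi> a \<longleftrightarrow> ?parent y = a" if "y < x" for y
      using less.IH[OF that, of a] greedy_parent_eq[of ?c ?q y] \<open>1 \<le> a\<close> by auto
    moreover have "1 \<le> y" if "y \<in> children \<pi> a" for y
      using children_bounds[OF lp that] by simp
    ultimately show ?thesis by auto
  qed
  have available: "available_parents ?c ?q x =
      {a \<in> {1..<x}. card {y \<in> children \<pi> a. y < x} < card (children \<pi> a)}"
    unfolding available_parents_def
  proof (rule Collect_cong)
    fix a
    show "(a \<in> {1..<x} \<and> card {y \<in> {1..<x}. ?parent y = a} < card (children \<pi> a)) \<longleftrightarrow>
        (a \<in> {1..<x} \<and> card {y \<in> children \<pi> a. y < x} < card (children \<pi> a))"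
    proof (cases "a \<in> {1..<x}")
      case True
      then have "{y \<in> {1..<x}. ?parent y = a} = {y \<in> children \<pi> a. y < x}"
        by (intro earlier_children) simp
      then show ?thesis by (simp only:)
    qed blast
  qed
  have parent_eq: "?parent x = p" if p: "x \<in> children \<pi> p" for p
  proof -
    have "1 \<le> p" "p < x"
      using children_bounds[OF lp p] by auto
    moreover have "{y \<in> children \<pi> p. y < x} \<subset> children \<pi> p"
      using p by auto
    then have "card {y \<in> children \<pi> p. y < x} < card (children \<pi> p)"
      by (rule psubset_card_mono[OF finite_children[OF lp]])
    ultimately have "p \<in> available_parents ?c ?q x"
      unfolding available by simp
    moreover have "a \<le> p" if a: "a \<in> available_parents ?c ?q x" for a
    proof (rule ccontr)
      assume "\<not> a \<le> p"
      then have "p < a" by simp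
      from a have "a < x" and unfinished: "card {y \<in> children \<pi> a. y < x} < card (children \<pi> a)"
        unfolding available by simp_all
      have "{y \<in> children \<pi> a. y < x} \<noteq> children \<pi> a"
      proof
        assume "{y \<in> children \<pi> a. y < x} = children \<pi> a"
        with unfinished show False by simp
      qed
      then obtain d where d: "d \<in> children \<pi> a" "\<not> d < x" by blast
      have "d \<noteq> x"
      proof
        assume "d = x"
        with d(1) parent_unique[OF lp p] have "p = a" by simp
        with \<open>p < a\<close> show False by simp
      qed
      with d(2) have "x < d" by simp
      with \<open>p < a\<close> \<open>a < x\<close> show False
        by (rule children_noncrossing[OF p d(1)])
    qed
    moreover have "finite (available_parents ?c ?q x)"
      by (simp add: available_parents_def)
    moreover have "?q x"
      using p by blast
    ultimately show ?thesis
      using greedy_parent_eq[of ?c ?q x] by (simp add: Max_eqI)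
  qed
  show ?case
    using parent_eq parent_unique[OF lp] by blast
qed

end

lemma noncrossing_linked_partition_eqI:
  assumes nclp1: "noncrossing_linked_partition m \<pi>1" and nclp2: "noncrossing_linked_partition m \<pi>2"
    and same_counts: "\<And>a. card (children \<pi>1 a) = card (children \<pi>2 a)"
    and same_singles: "\<And>x. singly_covered_minimal \<pi>1 x \<longleftrightarrow> singly_covered_minimal \<pi>2 x"
  shows "\<pi>1 = \<pi>2"
proof -
  from nclp1 nclp2 have lp1: "linked_partition m \<pi>1" and nc1: "noncrossing \<pi>1"
    and lp2: "linked_partition m \<pi>2" and nc2: "noncrossing \<pi>2"
    by (simp_all add: noncrossing_linked_partition_def)
  have "(\<exists>b. x \<in> children \<pi>1 b) \<longleftrightarrow> (\<exists>b. x \<in> children \<pi>2 b)" for x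
    using UN_children[OF lp1] UN_children[OF lp2] same_singles by blast
  then have "(\<lambda>y. \<exists>b. y \<in> children \<pi>1 b) = (\<lambda>y. \<exists>b. y \<in> children \<pi>2 b)"
    and "(\<lambda>a. card (children \<pi>1 a)) = (\<lambda>a. card (children \<pi>2 a))"
    using same_counts by simp_all
  then have "children \<pi>1 = children \<pi>2"
    using children_eq_greedy_parent[OF lp1 nc1] children_eq_greedy_parent[OF lp2 nc2]
    by (intro ext set_eqI) metis
  then show ?thesis
    using partition_eq_image_children[OF lp1] partition_eq_image_children[OF lp2] same_singles
    by simp
qed

lemma inj_on_phi: "inj_on (phi n) {\<pi>. noncrossing_linked_partition (n + 1) \<pi>}"
proof (rule inj_onI)
  fix \<pi>1 \<pi>2
  assume "\<pi>1 \<in> {\<pi>. noncrossing_linked_partition (n + 1) \<pi>}"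
    and "\<pi>2 \<in> {\<pi>. noncrossing_linked_partition (n + 1) \<pi>}" and "phi n \<pi>1 = phi n \<pi>2"
  then have nclp1: "noncrossing_linked_partition (n + 1) \<pi>1"
    and nclp2: "noncrossing_linked_partition (n + 1) \<pi>2" by simp_all
  then have lp1: "linked_partition (n + 1) \<pi>1" and lp2: "linked_partition (n + 1) \<pi>2"
    by (simp_all add: noncrossing_linked_partition_def)
  have column_eq: "card (children \<pi>1 (i + 1)) = card (children \<pi>2 (i + 1)) \<and>
      singly_covered_minimal \<pi>1 (i + 2) = singly_covered_minimal \<pi>2 (i + 2)" if "i < n" for i
    using \<open>phi n \<pi>1 = phi n \<pi>2\<close> columns_eqD[OF _ that]
    unfolding phi_eq_columns[OF lp1] phi_eq_columns[OF lp2] by blast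
  have "card (children \<pi>1 a) = card (children \<pi>2 a)" for a
  proof (cases "a \<in> {1..<n + 1}")
    case True
    then have "a - 1 < n" "a - 1 + 1 = a" by auto
    then show ?thesis using column_eq[of "a - 1"] by metis
  qed (simp add: children_eq_empty[OF lp1] children_eq_empty[OF lp2])
  moreover have "singly_covered_minimal \<pi>1 x \<longleftrightarrow> singly_covered_minimal \<pi>2 x" for x
  proof (cases "x \<in> {2..n + 1}")
    case True
    then have "x - 2 < n" "x - 2 + 2 = x" by auto
    then show ?thesis using column_eq[of "x - 2"] by metis
  next
    case False
    then have "x = 1 \<or> x \<notin> {1..n + 1}" by auto
    then show ?thesis
      using singly_covered_minimal_1[OF lp1] singly_covered_minimal_1[OF lp2]
        singly_covered_minimal_bounds[OF lp1] singly_covered_minimal_bounds[OF lp2] by auto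
  qed
  ultimately show "\<pi>1 = \<pi>2"
    using noncrossing_linked_partition_eqI[OF nclp1 nclp2] by blast
qed

section \<open>Rebuilding a partition from a Schroeder path\<close>

text \<open>
  \<open>c a\<close> is the number of children that \<open>a\<close> is to receive and \<open>q x\<close> says that \<open>x\<close> is to be a
  child; \<open>ballot\<close> is what a path staying above the diagonal provides.
\<close>

locale ballot_data =
  fixes m :: nat and c :: "nat \<Rightarrow> nat" and q :: "nat \<Rightarrow> bool"
  assumes child_bounds: "q x \<Longrightarrow> 2 \<le> x \<and> x \<le> m"
    and capacity_bounds: "0 < c a \<Longrightarrow> 1 \<le> a \<and> a < m"
    and ballot: "q x \<Longrightarrow> card {y \<in> {1..x}. q y} \<le> (\<Sum>a\<in>{1..<x}. c a)"
    and balanced: "(\<Sum>a\<in>{1..<m}. c a) = card {y. q y}"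
begin

abbreviation parent :: "nat \<Rightarrow> nat" where
  "parent \<equiv> greedy_parent c q"

definition attached :: "nat \<Rightarrow> nat set" where
  "attached a = {y. q y \<and> parent y = a}"

lemma available_parents_nonempty:
  assumes "q x"
  shows "available_parents c q x \<noteq> {}"
proof
  assume none: "available_parents c q x = {}"
  have "c a \<le> card {y \<in> {1..<x}. parent y = a}" if "a \<in> {1..<x}" for a
  proof -
    have "\<not> card {y \<in> {1..<x}. parent y = a} < c a"
      using none that unfolding available_parents_def by blast
    then show ?thesis by simp
  qed
  then have "(\<Sum>a\<in>{1..<x}. c a) \<le> (\<Sum>a\<in>{1..<x}. card {y \<in> {1..<x}. parent y = a})"
    by (rule sum_mono)
  also have "\<dots> = card (\<Union>a\<in>{1..<x}. {y \<in> {1..<x}. parent y = a})"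
    by (rule card_UN_disjoint[symmetric]) auto
  also have "\<dots> \<le> card {y \<in> {1..<x}. q y}"
    by (rule card_mono) (auto intro: greedy_parent_pos_imp[of c q])
  also have "\<dots> < card {y \<in> {1..x}. q y}"
  proof (rule psubset_card_mono)
    have "x \<in> {y \<in> {1..x}. q y}"
      using \<open>q x\<close> child_bounds[OF \<open>q x\<close>] by simp
    then show "{y \<in> {1..<x}. q y} \<subset> {y \<in> {1..x}. q y}" by auto
  qed simp
  also have "\<dots> \<le> (\<Sum>a\<in>{1..<x}. c a)"
    by (rule ballot[OF \<open>q x\<close>])
  finally show False by simp
qed

lemma parent_available: "q x \<Longrightarrow> parent x \<in> available_parents c q x"
  using Max_in[OF finite_available_parents available_parents_nonempty] greedy_parent_eq by simp

lemma parent_greatest: "q x \<Longrightarrow> a \<in> available_parents c q x \<Longrightarrow> a \<le> parent x"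
  using Max_ge[OF finite_available_parents] greedy_parent_eq by simp

lemma parent_bounds: "q x \<Longrightarrow> 1 \<le> parent x \<and> parent x < x"
  using parent_available by (simp add: available_parents_def)

lemma attached_bounds: "y \<in> attached a \<Longrightarrow> 1 \<le> a \<and> a < y \<and> y \<le> m"
  using parent_bounds child_bounds by (auto simp: attached_def)

lemma finite_attached: "finite (attached a)"
  by (rule finite_subset[of _ "{..m}"]) (auto dest: attached_bounds)

lemma attached_before:
  assumes "1 \<le> a"
  shows "{y \<in> {1..<x}. parent y = a} = {y \<in> attached a. y < x}"
proof (intro set_eqI iffI)
  fix y assume "y \<in> {y \<in> {1..<x}. parent y = a}"
  with assms greedy_parent_pos_imp[of c q] show "y \<in> {y \<in> attached a. y < x}"
    by (auto simp: attached_def)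
next
  fix y assume "y \<in> {y \<in> attached a. y < x}"
  with attached_bounds[of y a] show "y \<in> {y \<in> {1..<x}. parent y = a}"
    by (auto simp: attached_def)
qed

lemma card_attached_le: "card (attached a) \<le> c a"
proof (cases "attached a = {}")
  case False
  define z where "z = Max (attached a)"
  have z: "z \<in> attached a"
    unfolding z_def using False finite_attached by (rule Max_in[rotated])
  then have "1 \<le> a" "q z" "parent z = a"
    using attached_bounds by (auto simp: attached_def)
  have "attached a \<subseteq> insert z {y \<in> attached a. y < z}"
  proof
    fix y assume "y \<in> attached a"
    moreover from this have "y \<le> z"
      using finite_attached by (simp add: z_def)
    ultimately show "y \<in> insert z {y \<in> attached a. y < z}" by auto
  qed
  then have "card (attached a) \<le> card (insert z {y \<in> attached a. y < z})"
    by (rule card_mono[rotated]) (simp add: finite_attached)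
  also have "\<dots> = Suc (card {y \<in> attached a. y < z})"
    by (simp add: finite_attached)
  finally have "card (attached a) \<le> Suc (card {y \<in> attached a. y < z})" .
  moreover have "card {y \<in> attached a. y < z} < c a"
    using parent_available[OF \<open>q z\<close>] attached_before[OF \<open>1 \<le> a\<close>] \<open>parent z = a\<close>
    by (simp add: available_parents_def)
  ultimately show ?thesis by simp
qed simp

lemma card_attached: "card (attached a) = c a"
proof (cases "a \<in> {1..<m}")
  case False
  then have "c a = 0" "attached a = {}"
    using capacity_bounds attached_bounds by fastforce+
  then show ?thesis by simp
next
  case True
  have "(\<Union>a\<in>{1..<m}. attached a) = {y. q y}"
  proof (intro set_eqI iffI)
    fix y assume "y \<in> {y. q y}"
    then have "y \<in> attached (parent y)" "parent y \<in> {1..<m}"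
      using parent_bounds[of y] child_bounds[of y] by (auto simp: attached_def)
    then show "y \<in> (\<Union>a\<in>{1..<m}. attached a)" by blast
  qed (auto simp: attached_def)
  moreover have "(\<Sum>a\<in>{1..<m}. card (attached a)) = card (\<Union>a\<in>{1..<m}. attached a)"
    by (rule card_UN_disjoint[symmetric]) (use finite_attached in \<open>auto simp: attached_def\<close>)
  ultimately have "(\<Sum>a\<in>{1..<m}. card (attached a)) = (\<Sum>a\<in>{1..<m}. c a)"
    by (simp add: balanced[symmetric])
  moreover have "(\<Sum>a\<in>{1..<m}. card (attached a)) < (\<Sum>a\<in>{1..<m}. c a)" if "card (attached a) < c a"
    by (rule sum_strict_mono_ex1) (use card_attached_le that True in auto)
  ultimately show ?thesis
    using card_attached_le[of a] by linarith
qed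

lemma attached_noncrossing:
  assumes "q x" "parent x < b" "b < x" "x < d" "d \<in> attached b"
  shows False
proof -
  have "1 \<le> b" using parent_bounds[OF \<open>q x\<close>] \<open>parent x < b\<close> by simp
  have "d \<notin> {y \<in> attached b. y < x}"
    using \<open>x < d\<close> by simp
  with \<open>d \<in> attached b\<close> have "{y \<in> attached b. y < x} \<subset> attached b"
    by blast
  then have "card {y \<in> attached b. y < x} < card (attached b)"
    by (rule psubset_card_mono[OF finite_attached])
  with \<open>1 \<le> b\<close> \<open>b < x\<close> have "b \<in> available_parents c q x"
    unfolding available_parents_def mem_Collect_eq attached_before[OF \<open>1 \<le> b\<close>] card_attached
    by simp
  with \<open>parent x < b\<close> show False
    using parent_greatest[OF \<open>q x\<close>] by fastforce
qed

definition block_mins :: "nat set" where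
  "block_mins = {a \<in> {1..m}. \<not> q a \<or> 0 < c a}"

definition blocks :: "nat set set" where
  "blocks = (\<lambda>a. insert a (attached a)) ` block_mins"

lemma card_insert_attached: "card (insert a (attached a)) = Suc (c a)"
proof -
  have "a \<notin> attached a"
    using attached_bounds by blast
  then show ?thesis
    by (simp add: finite_attached card_attached)
qed

lemma le_if_mem_insert_attached: "y \<in> insert a (attached a) \<Longrightarrow> a \<le> y"
  using attached_bounds by fastforce

lemma Min_insert_attached: "Min (insert a (attached a)) = a"
  using finite_attached attached_bounds by (intro Min_eqI) fastforce+

lemma attached_empty:
  assumes "a \<notin> block_mins"
  shows "attached a = {}"
proof (rule ccontr)
  assume "attached a \<noteq> {}"
  then obtain y where y: "y \<in> attached a" by blast
  then have "1 \<le> a" "a < m"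
    using attached_bounds[OF y] by simp_all
  moreover have "0 < card (attached a)"
    using y finite_attached[of a] by (auto simp: card_gt_0_iff)
  then have "0 < c a"
    by (simp add: card_attached)
  ultimately show False
    using assms by (simp add: block_mins_def)
qed

lemma children_blocks: "children blocks a = attached a"
proof -
  have "children blocks a = (if a \<in> block_mins then attached a else {})"
    using Min_insert_attached attached_bounds
    by (auto simp: children_def blocks_def)
  then show ?thesis
    using attached_empty by simp
qed

lemma nearly_disjoint_blocks:
  assumes "a \<in> block_mins" "b \<in> block_mins" "a \<noteq> b"
  shows "nearly_disjoint (insert a (attached a)) (insert b (attached b))"
  unfolding nearly_disjoint_def Min_insert_attached
proof
  have big: "1 < card (insert z (attached z))" if "z \<in> block_mins" "q z" for z
    using that by (simp add: block_mins_def card_insert_attached)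
  fix i assume i: "i \<in> insert a (attached a) \<inter> insert b (attached b)"
  consider "i = a" | "i = b" | "i \<in> attached a" "i \<in> attached b"
    using i by auto
  then show "i = a \<and> 1 < card (insert a (attached a)) \<and> i \<noteq> b \<or>
             i = b \<and> 1 < card (insert b (attached b)) \<and> i \<noteq> a"
  proof cases
    case 1
    with i assms have "q a" by (auto simp: attached_def)
    with 1 assms big show ?thesis by simp
  next
    case 2
    with i assms have "q b" by (auto simp: attached_def)
    with 2 assms big show ?thesis by simp
  next
    case 3
    with assms show ?thesis by (simp add: attached_def)
  qed
qed

lemma linked_partition_blocks: "linked_partition m blocks"
proof -
  have bounded: "B \<noteq> {} \<and> B \<subseteq> {1..m}" if "B \<in> blocks" for B
  proof -
    from that obtain a where "a \<in> block_mins" "B = insert a (attached a)"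
      by (auto simp: blocks_def)
    moreover have "attached a \<subseteq> {1..m}"
    proof
      fix y assume "y \<in> attached a"
      with attached_bounds[OF this] show "y \<in> {1..m}" by simp
    qed
    ultimately show ?thesis
      by (simp add: block_mins_def)
  qed
  have covered: "x \<in> \<Union>blocks" if "x \<in> {1..m}" for x
  proof (cases "q x")
    case True
    then have "1 \<le> parent x" "parent x < x" "0 < c (parent x)"
      using parent_available[OF True] by (auto simp: available_parents_def)
    then have "parent x \<in> block_mins"
      using child_bounds[OF True] by (simp add: block_mins_def)
    moreover have "x \<in> attached (parent x)"
      using True by (simp add: attached_def)
    ultimately show ?thesis by (auto simp: blocks_def)
  next
    case False
    with that have "x \<in> block_mins" by (simp add: block_mins_def)
    then show ?thesis by (auto simp: blocks_def)
  qed
  have "nearly_disjoint B B'" if "B \<in> blocks" "B' \<in> blocks" "B \<noteq> B'" for B B'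
    using that nearly_disjoint_blocks by (auto simp: blocks_def)
  with bounded covered show ?thesis
    unfolding linked_partition_def by blast
qed

lemma noncrossing_blocks: "noncrossing blocks"
  unfolding noncrossing_def
proof
  assume "\<exists>B\<in>blocks. \<exists>B'\<in>blocks. B \<noteq> B' \<and> (\<exists>a\<in>B. \<exists>c\<in>B. \<exists>b\<in>B'. \<exists>d\<in>B'. a < b \<and> b < c \<and> c < d)"
  then obtain B B' a' b' c' d' where "B \<in> blocks" "B' \<in> blocks" "B \<noteq> B'"
    and el: "a' \<in> B" "c' \<in> B" "b' \<in> B'" "d' \<in> B'" and order: "a' < b'" "b' < c'" "c' < d'"
    by blast
  obtain a b where B: "B = insert a (attached a)" and B': "B' = insert b (attached b)"
    using \<open>B \<in> blocks\<close> \<open>B' \<in> blocks\<close> unfolding blocks_def by blast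
  with \<open>B \<noteq> B'\<close> have "a \<noteq> b" by blast
  from el B B' have "a \<le> a'" "b \<le> b'"
    using le_if_mem_insert_attached by simp_all
  with el B B' order have c': "c' \<in> attached a" and d': "d' \<in> attached b"
    by auto
  show False
  proof (cases "a < b")
    case True
    with c' d' \<open>b \<le> b'\<close> order show False
      by (intro attached_noncrossing[of c' b d']) (auto simp: attached_def)
  next
    case False
    with \<open>a \<noteq> b\<close> have "b < a" by simp
    with el B' \<open>a \<le> a'\<close> order have "b' \<in> attached b" by auto
    with c' \<open>b < a\<close> \<open>a \<le> a'\<close> order show False
      by (intro attached_noncrossing[of b' a c']) (auto simp: attached_def)
  qed
qed

lemma singly_covered_minimal_blocks: "singly_covered_minimal blocks x \<longleftrightarrow> x \<in> {1..m} \<and> \<not> q x"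
proof -
  have "(\<forall>a. x \<notin> attached a) \<longleftrightarrow> \<not> q x"
    by (auto simp: attached_def)
  then show ?thesis
    unfolding singly_covered_minimal_iff[OF linked_partition_blocks] children_blocks by simp
qed

end

lemma ballot_data_columns:
  assumes "schroeder_path n (columns h d n)"
  shows "ballot_data (n + 1) (\<lambda>a. if a \<in> {1..n} then h (a - 1) else 0)
    (\<lambda>x. x \<in> {2..n + 1} \<and> \<not> d (x - 2))"
    (is "ballot_data _ ?c ?q")
proof
  from assms have total: "(\<Sum>i<n. h i) + card {i. i < n \<and> d i} = n"
    and above: "\<And>k. k \<le> n \<Longrightarrow> k \<le> (\<Sum>i<k. h i) + card {i. i < k \<and> d i}"
    unfolding schroeder_path_columns_iff ycoord_columns by auto
  have sum_c: "(\<Sum>a\<in>{1..<k + 1}. ?c a) = (\<Sum>i<k. h i)" if "k \<le> n" for k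
    using that sum.shift_bounds_Suc_ivl[of ?c 0 k] by (simp add: atLeast0LessThan)
  have card_q: "card {y \<in> {1..k + 1}. ?q y} = card {i. i < k \<and> \<not> d i}" if "k \<le> n" for k
  proof -
    have "{y \<in> {1..k + 1}. ?q y} = (\<lambda>i. i + 2) ` {i. i < k \<and> \<not> d i}"
    proof (intro set_eqI iffI)
      fix y assume "y \<in> {y \<in> {1..k + 1}. ?q y}"
      then have "y - 2 \<in> {i. i < k \<and> \<not> d i}" "y = y - 2 + 2" by auto
      then show "y \<in> (\<lambda>i. i + 2) ` {i. i < k \<and> \<not> d i}"
        by (rule rev_image_eqI)
    qed (use that in auto)
    then show ?thesis
      by (simp add: card_image inj_on_def)
  qed
  show "2 \<le> x \<and> x \<le> n + 1" if "?q x" for x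
    using that by simp
  show "1 \<le> a \<and> a < n + 1" if "0 < ?c a" for a
    using that by (simp split: if_splits)
  show "card {y \<in> {1..x}. ?q y} \<le> (\<Sum>a\<in>{1..<x}. ?c a)" if "?q x" for x
  proof -
    from that have "x - 1 \<le> n" "x = x - 1 + 1" by auto
    then show ?thesis
      using card_q[of "x - 1"] sum_c[of "x - 1"] above[of "x - 1"] card_lessThan_split[of "x - 1" d] by simp
  qed
  have "{y. ?q y} = {y \<in> {1..n + 1}. ?q y}" by auto
  then show "(\<Sum>a\<in>{1..<n + 1}. ?c a) = card {y. ?q y}"
    using card_q[of n] sum_c[of n] total card_lessThan_split[of n d] by simp
qed

lemma schroeder_path_in_image_phi:
  assumes "schroeder_path n p"
  shows "p \<in> phi n ` {\<pi>. noncrossing_linked_partition (n + 1) \<pi>}"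
proof -
  obtain h d where p: "p = columns h d n"
    using assms by (rule schroeder_path_obtain_columns)
  interpret ballot_data "n + 1" "\<lambda>a. if a \<in> {1..n} then h (a - 1) else 0"
    "\<lambda>x. x \<in> {2..n + 1} \<and> \<not> d (x - 2)"
    using assms unfolding p by (rule ballot_data_columns)
  have "phi n blocks =
      columns (\<lambda>i. card (children blocks (i + 1))) (\<lambda>i. singly_covered_minimal blocks (i + 2)) n"
    by (rule phi_eq_columns[OF linked_partition_blocks])
  also have "\<dots> = p"
    unfolding p children_blocks card_attached singly_covered_minimal_blocks
    by (rule columns_cong) simp
  finally have "phi n blocks = p" .
  moreover have "noncrossing_linked_partition (n + 1) blocks"
    using linked_partition_blocks noncrossing_blocks by (simp add: noncrossing_linked_partition_def)
  ultimately show ?thesis by blast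
qed

theorem theorem2p4:
  fixes n :: nat
  shows "bij_betw (phi n) {\<pi>. noncrossing_linked_partition (n + 1) \<pi>}
                          {p. schroeder_path n p}"
proof (rule bij_betw_imageI)
  show "inj_on (phi n) {\<pi>. noncrossing_linked_partition (n + 1) \<pi>}"
    by (rule inj_on_phi)
  show "phi n ` {\<pi>. noncrossing_linked_partition (n + 1) \<pi>} = {p. schroeder_path n p}"
    using schroeder_path_phi schroeder_path_in_image_phi
    by (auto simp: noncrossing_linked_partition_def)
qed

end
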